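(* Let $(\mathcal G_0,\mathcal G_1)$ be a sub-decomposition and let $G_0=([d],E_0)\in\mathcal G_0$ have maximum degree bounded by a constant $D$ (independent of $d$). Suppose there exist constants $0<c,\gamma\le1$ such that for each vertex $v\in[d]$ there is a set of vertices $W_v$ with $|W_v|\ge c\,d^{\gamma}$ and $([d],E_0\cup\{\{v,w\}\})\in\mathcal G_1$ for all $w\in W_v$. Then there exists a single-edge divider $\mathcal C$ with null base $G_0$ satisfying $M(\mathcal C,d_{G_0},\log|\mathcal C|)\asymp\log d$.
   Context: A sub-decomposition $(\mathcal G_0,\mathcal G_1)$ is a pair of disjoint families of graphs on vertex set $[d]$. For a graph $G$ on $[d]$, $d_G(u,v)$ is the length of a shortest path between vertices $u,v$ in $G$ ($\infty$ if none); for edges $e,e'$ (not necessarily in $G$), $d_G(e,e')=\min_{u\in e,v\in e'}d_G(u,v)$. Given $G_0=([d],E_0)\in\mathcal G_0$, an edge set $\mathcal C$ is a single-edge divider with null base $G_0$ if $([d],E_0\cup\{e\})\in\mathcal G_1$ for every $e\in\mathcal C$. An $r$-packing of $\mathcal C$ (w.r.t. $G$) is a subset $N\subseteq\mathcal C$ with $d_G(e,e')\ge r$ for all distinct $e,e'\in N$, and $M(\mathcal C,d_G,r)=\log\max\{|N|: N\text{ an }r\text{-packing of }\mathcal C\}$. $a_d\asymp b_d$ means $c'<a_d/b_d<C''$ for positive constants $c',C''$. *)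

theory Defs
  imports "HOL-Analysis.Analysis"
begin

text \<open>Graphs on the vertex set [d] = {1..d} are represented by their edge sets;
an edge is a 2-element set of vertices.\<close>

definition is_graph :: "nat \<Rightarrow> nat set set \<Rightarrow> bool" where
  "is_graph d E \<longleftrightarrow> (\<forall>e\<in>E. \<exists>u v. e = {u, v} \<and> u \<noteq> v \<and> u \<in> {1..d} \<and> v \<in> {1..d})"

definition sub_decomposition :: "nat \<Rightarrow> nat set set set \<Rightarrow> nat set set set \<Rightarrow> bool" where
  "sub_decomposition d G0s G1s \<longleftrightarrow>
     (\<forall>G\<in>G0s. is_graph d G) \<and> (\<forall>G\<in>G1s. is_graph d G) \<and> G0s \<inter> G1s = {}"

text \<open>Shortest-path distance (infinity if no path).\<close>
definition gdist :: "nat set set \<Rightarrow> nat \<Rightarrow> nat \<Rightarrow> enat" where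
  "gdist E u v = (INF n \<in> {n. ((\<lambda>x y. {x, y} \<in> E) ^^ n) u v}. enat n)"

definition edist :: "nat set set \<Rightarrow> nat set \<Rightarrow> nat set \<Rightarrow> enat" where
  "edist E e e' = (INF p \<in> e \<times> e'. gdist E (fst p) (snd p))"

definition max_degree_le :: "nat set set \<Rightarrow> nat \<Rightarrow> bool" where
  "max_degree_le E D \<longleftrightarrow> (\<forall>v. card {w. {v, w} \<in> E} \<le> D)"

text \<open>Single-edge divider with null base E0 (E0 is assumed to be in the null family).\<close>
definition single_edge_divider :: "nat set set set \<Rightarrow> nat set set \<Rightarrow> nat set set \<Rightarrow> bool" where
  "single_edge_divider G1s E0 C \<longleftrightarrow> (\<forall>e\<in>C. E0 \<union> {e} \<in> G1s)"

definition is_packing :: "nat set set \<Rightarrow> nat set set \<Rightarrow> real \<Rightarrow> nat set set \<Rightarrow> bool" where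
  "is_packing E C r N \<longleftrightarrow> N \<subseteq> C \<and>
     (\<forall>e\<in>N. \<forall>e'\<in>N. e \<noteq> e' \<longrightarrow> ereal r \<le> ereal_of_enat (edist E e e'))"

definition packing_entropy :: "nat set set \<Rightarrow> nat set set \<Rightarrow> real \<Rightarrow> real" where
  "packing_entropy E C r = ln (real (Max {card N | N. is_packing E C r N}))"

end

theory Submission
  imports Defs "HOL-Real_Asymp.Real_Asymp"
begin

text \<open>The edges of the divider are chosen greedily. Take R \<approx> e ln d and k = \<lfloor>d^e\<rfloor>.
  In a graph of maximum degree D a ball of radius R has at most R (D+1)^R = d^O(e) vertices,
  so for small e the balls around the endpoints of fewer than k chosen edges cover far fewer
  than c d^\<gamma> vertices; hence a vertex v and a partner w \<in> W v outside all of them exist,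
  and {v, w} keeps distance at least R from the edges chosen before. The resulting k edges are
  an R-packing with R \<ge> ln k, so the packing entropy at radius ln |C| equals ln k \<approx> e ln d.\<close>

abbreviation adj :: "nat set set \<Rightarrow> nat \<Rightarrow> nat \<Rightarrow> bool" where
  "adj E \<equiv> \<lambda>x y. {x, y} \<in> E"

definition graph_ball :: "nat set set \<Rightarrow> nat \<Rightarrow> nat \<Rightarrow> nat set" where
  "graph_ball E x R = {y. \<exists>n<R. (adj E ^^ n) x y}"

lemma is_graph_neighbour_range:
  assumes "is_graph d E" "{v, w} \<in> E"
  shows "w \<in> {1..d}"
  using assms unfolding is_graph_def by (fastforce simp: doubleton_eq_iff)

lemma adj_relpowp_sym: "(adj E ^^ n) x y \<Longrightarrow> (adj E ^^ n) y x"
proof (induction n arbitrary: y)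
  case 0
  then show ?case by simp
next
  case (Suc n)
  then obtain m where "(adj E ^^ n) x m" "adj E y m"
    by (auto elim: relpowp_Suc_E simp: insert_commute)
  then show ?case using Suc.IH by (blast intro: relpowp_Suc_I2)
qed

lemma graph_ball_sym: "y \<in> graph_ball E x R \<longleftrightarrow> x \<in> graph_ball E y R"
  unfolding graph_ball_def by (blast intro: adj_relpowp_sym)

lemma center_in_graph_ball: "0 < R \<Longrightarrow> x \<in> graph_ball E x R"
  unfolding graph_ball_def by auto

lemma finite_relpowp_adj:
  assumes "is_graph d E"
  shows "finite {y. (adj E ^^ n) x y}"
proof (rule finite_subset)
  show "{y. (adj E ^^ n) x y} \<subseteq> insert x {1..d}"
    using assms by (cases n) (auto elim: relpowp_Suc_E dest: is_graph_neighbour_range)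
qed simp

lemma card_relpowp_adj_le:
  assumes g: "is_graph d E" and deg: "max_degree_le E D"
  shows "card {y. (adj E ^^ n) x y} \<le> D ^ n"
proof (induction n)
  case 0
  then show ?case by simp
next
  case (Suc n)
  let ?N = "{y. (adj E ^^ n) x y}"
  have "{y. (adj E ^^ Suc n) x y} = (\<Union>m\<in>?N. {z. {m, z} \<in> E})"
    by (auto intro: relpowp_Suc_I elim: relpowp_Suc_E)
  then have "card {y. (adj E ^^ Suc n) x y} \<le> (\<Sum>m\<in>?N. card {z. {m, z} \<in> E})"
    using card_UN_le[OF finite_relpowp_adj[OF g]] by simp
  also have "\<dots> \<le> card ?N * D"
    using sum_bounded_above[of ?N "\<lambda>m. card {z. {m, z} \<in> E}" D] deg
    by (simp add: max_degree_le_def)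
  also have "\<dots> \<le> D ^ Suc n"
    using Suc.IH by (simp add: mult.commute)
  finally show ?case .
qed

lemma graph_ball_eq_UN: "graph_ball E x R = (\<Union>n<R. {y. (adj E ^^ n) x y})"
  unfolding graph_ball_def by auto

lemma finite_graph_ball: "is_graph d E \<Longrightarrow> finite (graph_ball E x R)"
  unfolding graph_ball_eq_UN by (auto intro: finite_relpowp_adj)

lemma card_graph_ball_le:
  assumes g: "is_graph d E" and deg: "max_degree_le E D"
  shows "card (graph_ball E x R) \<le> R * (D + 1) ^ R"
proof -
  have "card (graph_ball E x R) \<le> (\<Sum>n<R. card {y. (adj E ^^ n) x y})"
    unfolding graph_ball_eq_UN by (rule card_UN_le) simp
  also have "\<dots> \<le> (\<Sum>n<R. (D + 1) ^ R)"
  proof (rule sum_mono)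
    fix n assume "n \<in> {..<R}"
    then have "D ^ n \<le> (D + 1) ^ R"
      using power_mono[of D "D + 1" n] power_increasing[of n R "D + 1"] by simp
    then show "card {y. (adj E ^^ n) x y} \<le> (D + 1) ^ R"
      using card_relpowp_adj_le[OF g deg] order_trans by blast
  qed
  finally show ?thesis by simp
qed

lemma edist_ge_if_disjoint_graph_balls:
  assumes "\<forall>x\<in>e. graph_ball E x R \<inter> e' = {}"
  shows "enat R \<le> edist E e e'"
  using assms unfolding edist_def gdist_def graph_ball_def
  by (force intro!: INF_greatest simp: not_less[symmetric])

definition far_apart :: "nat set set \<Rightarrow> nat \<Rightarrow> nat set set \<Rightarrow> bool" where
  "far_apart E R C \<longleftrightarrow> (\<forall>e\<in>C. \<forall>e'\<in>C. e \<noteq> e' \<longrightarrow> (\<forall>x\<in>e. graph_ball E x R \<inter> e' = {}))"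

lemma far_apart_insert:
  assumes "far_apart E R C"
    and "v \<notin> (\<Union>x\<in>\<Union>C. graph_ball E x R)" "w \<notin> (\<Union>x\<in>\<Union>C. graph_ball E x R)"
  shows "far_apart E R (insert {v, w} C)"
  unfolding far_apart_def
proof (intro ballI impI)
  fix e e' x
  assume e: "e \<in> insert {v, w} C" and e': "e' \<in> insert {v, w} C" and "e \<noteq> e'" and x: "x \<in> e"
  show "graph_ball E x R \<inter> e' = {}"
  proof (cases "e' \<in> C")
    case True
    show ?thesis
    proof (cases "e \<in> C")
      case True
      then show ?thesis using \<open>e' \<in> C\<close> \<open>e \<noteq> e'\<close> x assms(1) unfolding far_apart_def by blast
    next
      case False
      then have "x \<in> {v, w}" using e x by auto
      then show ?thesis using \<open>e' \<in> C\<close> assms(2,3) graph_ball_sym by blast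
    qed
  next
    case False
    then have "e' = {v, w}" "e \<in> C" using e e' \<open>e \<noteq> e'\<close> by auto
    then show ?thesis using x assms(2,3) by blast
  qed
qed

lemma card_Union_edges_le:
  assumes "\<forall>e\<in>C. \<exists>v w. e = {v, w}"
  shows "card (\<Union>C) \<le> 2 * card C"
proof -
  have "card (\<Union>C) \<le> sum card C" by (rule card_Union_le_sum_card)
  also have "\<dots> \<le> card C * 2"
  proof (rule sum_bounded_above[of C card 2, simplified])
    fix e assume "e \<in> C"
    with assms obtain v w where "e = {v, w}" by blast
    then show "card e \<le> 2" by (simp add: card_insert_if)
  qed
  finally show ?thesis by simp
qed

lemma card_UN_graph_balls_le:
  assumes "is_graph d E" "max_degree_le E D" "finite S"
  shows "card (\<Union>x\<in>S. graph_ball E x R) \<le> card S * (R * (D + 1) ^ R)"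
proof -
  have "card (\<Union>x\<in>S. graph_ball E x R) \<le> (\<Sum>x\<in>S. card (graph_ball E x R))"
    using assms(3) by (rule card_UN_le)
  also have "\<dots> \<le> card S * (R * (D + 1) ^ R)"
    using sum_bounded_above[of S "\<lambda>x. card (graph_ball E x R)" "R * (D + 1) ^ R"]
      card_graph_ball_le[OF assms(1,2)] by simp
  finally show ?thesis .
qed

lemma exists_far_apart_edges:
  assumes g: "is_graph d E" and deg: "max_degree_le E D" and R: "0 < R"
  shows "(\<forall>v\<in>{1..d}. 2 * k * (R * (D + 1) ^ R) < card (W v)) \<Longrightarrow> 2 * k * (R * (D + 1) ^ R) < d \<Longrightarrow>
    \<exists>C. finite C \<and> card C = k \<and> (\<forall>e\<in>C. \<exists>v\<in>{1..d}. \<exists>w\<in>W v. e = {v, w}) \<and> far_apart E R C"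
proof (induction k)
  case 0
  show ?case by (auto simp: far_apart_def intro: exI[of _ "{}"])
next
  case (Suc k)
  let ?B = "R * (D + 1) ^ R"
  have le_B: "2 * k * ?B \<le> 2 * Suc k * ?B" by simp
  have "\<exists>C. finite C \<and> card C = k \<and> (\<forall>e\<in>C. \<exists>v\<in>{1..d}. \<exists>w\<in>W v. e = {v, w}) \<and> far_apart E R C"
    using Suc.prems le_B by (intro Suc.IH) (auto dest: le_less_trans)
  then obtain C where C: "finite C" "card C = k"
    "\<forall>e\<in>C. \<exists>v\<in>{1..d}. \<exists>w\<in>W v. e = {v, w}" "far_apart E R C"
    by blast
  define F where "F = (\<Union>x\<in>\<Union>C. graph_ball E x R)"
  have edges: "\<forall>e\<in>C. \<exists>v w. e = {v, w}" using C(3) by blast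
  have fin_edges: "finite (\<Union>C)"
    using C(1) edges by (intro finite_Union) auto
  have fin_F: "finite F"
    unfolding F_def using fin_edges finite_graph_ball[OF g] by (intro finite_UN_I)
  have "card F \<le> card (\<Union>C) * ?B"
    unfolding F_def by (rule card_UN_graph_balls_le[OF g deg fin_edges])
  also have "\<dots> \<le> 2 * k * ?B"
    using card_Union_edges_le[OF edges] C(2) by (intro mult_right_mono) simp_all
  finally have "card F \<le> 2 * k * ?B" .
  then have card_F: "card F < card {1..d}" "\<forall>v\<in>{1..d}. card F < card (W v)"
    using le_B Suc.prems by auto
  obtain v where v: "v \<in> {1..d}" "v \<notin> F"
    using card_F(1) card_mono[OF fin_F, of "{1..d}"] by (meson not_le subsetI)
  obtain w where w: "w \<in> W v" "w \<notin> F"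
    using card_F(2) v(1) card_mono[OF fin_F, of "W v"] by (meson not_le subsetI)
  have "{v, w} \<notin> C"
    using v(2) center_in_graph_ball[OF R] unfolding F_def by blast
  moreover have "far_apart E R (insert {v, w} C)"
    using far_apart_insert[OF C(4), of v w] v(2) w(2) unfolding F_def by blast
  ultimately show ?case
    using C(1-3) v(1) w(1) by (intro exI[of _ "insert {v, w} C"]) auto
qed


lemma is_packing_self_if_far_apart:
  assumes "far_apart E R C" "r \<le> real R"
  shows "is_packing E C r C"
  unfolding is_packing_def
proof (intro conjI ballI impI subset_refl)
  fix e e' assume "e \<in> C" "e' \<in> C" "e \<noteq> e'"
  then have "enat R \<le> edist E e e'"
    using assms(1) unfolding far_apart_def by (blast intro: edist_ge_if_disjoint_graph_balls)
  then have "ereal (real R) \<le> ereal_of_enat (edist E e e')"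
    by (metis ereal_of_enat_le_iff ereal_of_enat_simps(1))
  then show "ereal r \<le> ereal_of_enat (edist E e e')"
    using assms(2) by (meson ereal_less_eq(3) order_trans)
qed

lemma is_packing_mono_radius:
  "is_packing E C r N \<Longrightarrow> r' \<le> r \<Longrightarrow> is_packing E C r' N"
  unfolding is_packing_def by (meson ereal_less_eq(3) order_trans)

lemma packing_entropy_eq_ln_card:
  assumes "finite C" "is_packing E C r C"
  shows "packing_entropy E C r = ln (real (card C))"
proof -
  have "Max {card N | N. is_packing E C r N} = card C"
  proof (rule Max_eqI)
    show "finite {card N | N. is_packing E C r N}"
      by (rule finite_subset[of _ "card ` Pow C"]) (use assms(1) in \<open>auto simp: is_packing_def\<close>)
    show "n \<le> card C" if "n \<in> {card N | N. is_packing E C r N}" for n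
      using that assms(1) by (auto simp: is_packing_def intro: card_mono)
  qed (use assms(2) in blast)
  then show ?thesis unfolding packing_entropy_def by simp
qed

text \<open>With R about e ln x, the factor (D+1)^R is x^(e ln(D+1)); the exponent e is chosen
  so that together with k \<le> x^e this gives x^(\<gamma>/4), far below the x^\<gamma> candidates per vertex.\<close>

lemma card_balls_estimate:
  fixes x e \<gamma> :: real and D k R :: nat
  assumes x: "1 < x" and e: "0 < e" and exponent: "e * (1 + ln (real D + 1)) = \<gamma> / 4"
    and k: "real k \<le> x powr e" and R: "real R \<le> e * ln x + 1"
  shows "real (2 * k * (R * (D + 1) ^ R)) \<le> 2 * (real D + 1) * x powr (\<gamma> / 4) * (e * ln x + 1)"
proof -
  have "(real D + 1) ^ R = (real D + 1) powr real R"
    by (simp add: powr_realpow)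
  also have "\<dots> \<le> (real D + 1) powr (e * ln x + 1)"
    using R by (intro powr_mono) simp_all
  also have "\<dots> = (real D + 1) powr (e * ln x) * (real D + 1)"
    by (simp add: powr_add)
  also have "(real D + 1) powr (e * ln x) = x powr (e * ln (real D + 1))"
    using x by (simp add: powr_def mult_ac)
  finally have pow: "(real D + 1) ^ R \<le> (real D + 1) * x powr (e * ln (real D + 1))"
    by (simp add: mult.commute)
  have "real (2 * k * (R * (D + 1) ^ R)) = 2 * real k * (real R * (real D + 1) ^ R)"
    by (simp add: add.commute)
  also have "\<dots> \<le> 2 * x powr e * ((e * ln x + 1) * ((real D + 1) * x powr (e * ln (real D + 1))))"
    using x e by (intro mult_mono k R pow mult_left_mono) auto
  also have "\<dots> = 2 * (real D + 1) * x powr (e + e * ln (real D + 1)) * (e * ln x + 1)"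
    by (simp add: powr_add mult_ac)
  also have "e + e * ln (real D + 1) = \<gamma> / 4"
    using exponent by (simp add: ring_distribs)
  finally show ?thesis .
qed

lemma exists_far_apart_divider:
  fixes c \<gamma> e :: real and D :: nat
  assumes g: "is_graph d E" and deg: "max_degree_le E D"
    and c: "c \<le> 1" and \<gamma>: "\<gamma> \<le> 1" and e: "0 < e"
    and exponent: "e * (1 + ln (real D + 1)) = \<gamma> / 4"
    and d: "1 < real d"
    and large: "2 * (real D + 1) * real d powr (\<gamma> / 4) * (e * ln (real d) + 1) < c * real d powr \<gamma>"
    and W: "\<forall>v\<in>{1..d}. \<exists>W. c * real d powr \<gamma> \<le> real (card W) \<and> (\<forall>w\<in>W. E \<union> {{v, w}} \<in> G1)"
  shows "\<exists>C. single_edge_divider G1 E C \<and> finite C \<and> card C = nat \<lfloor>real d powr e\<rfloor> \<and>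
           is_packing E C (e * ln (real d)) C"
proof -
  define k where "k = nat \<lfloor>real d powr e\<rfloor>"
  define R where "R = nat \<lceil>e * ln (real d)\<rceil>"
  obtain Wf where Wf: "\<forall>v\<in>{1..d}. c * real d powr \<gamma> \<le> real (card (Wf v)) \<and> (\<forall>w\<in>Wf v. E \<union> {{v, w}} \<in> G1)"
    using bchoice[OF W] by blast
  have e_ln: "0 < e * ln (real d)" using d e by simp
  then have "0 < R" unfolding R_def by simp
  have "real k \<le> real d powr e" unfolding k_def by (simp add: of_nat_nat)
  moreover have "real R \<le> e * ln (real d) + 1" unfolding R_def using e_ln by (simp add: of_nat_nat)
  ultimately have bound: "real (2 * k * (R * (D + 1) ^ R)) < c * real d powr \<gamma>"
    using card_balls_estimate[OF d e exponent] large by (meson le_less_trans)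
  have "c * real d powr \<gamma> \<le> real d powr \<gamma>"
    using mult_right_mono[OF c, of "real d powr \<gamma>"] by simp
  also have "\<dots> \<le> real d"
    using powr_mono[OF \<gamma>, of "real d"] d by simp
  finally have "2 * k * (R * (D + 1) ^ R) < d"
    using bound by linarith
  moreover have "\<forall>v\<in>{1..d}. 2 * k * (R * (D + 1) ^ R) < card (Wf v)"
    using Wf bound by (fastforce simp del: of_nat_mult)
  ultimately obtain C where C: "finite C" "card C = k"
    "\<forall>e\<in>C. \<exists>v\<in>{1..d}. \<exists>w\<in>Wf v. e = {v, w}" "far_apart E R C"
    using exists_far_apart_edges[OF g deg \<open>0 < R\<close>] by blast
  have "single_edge_divider G1 E C"
    unfolding single_edge_divider_def using C(3) Wf by fastforce
  moreover have "is_packing E C (e * ln (real d)) C"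
    using C(4) unfolding R_def by (rule is_packing_self_if_far_apart) linarith
  ultimately show ?thesis using C(1,2) unfolding k_def by blast
qed

lemma eventually_exists_far_apart_divider:
  fixes c \<gamma> e :: real and D :: nat
  assumes g: "\<And>d. is_graph d (G0 d)" and deg: "\<And>d. max_degree_le (G0 d) D"
    and c: "0 < c" "c \<le> 1" and \<gamma>: "0 < \<gamma>" "\<gamma> \<le> 1" and e: "0 < e"
    and exponent: "e * (1 + ln (real D + 1)) = \<gamma> / 4"
    and W: "\<forall>\<^sub>F d in sequentially. \<forall>v\<in>{1..d}. \<exists>W :: nat set.
              real (card W) \<ge> c * real d powr \<gamma> \<and> (\<forall>w\<in>W. G0 d \<union> {{v, w}} \<in> G1s d)"
  shows "\<forall>\<^sub>F d in sequentially. \<exists>C. single_edge_divider (G1s d) (G0 d) C \<and> finite C \<and>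
           card C = nat \<lfloor>real d powr e\<rfloor> \<and> is_packing (G0 d) C (e * ln (real d)) C"
proof -
  have "\<forall>\<^sub>F d in sequentially. 1 < real d" by real_asymp
  moreover have "\<forall>\<^sub>F d in sequentially.
      2 * (real D + 1) * real d powr (\<gamma> / 4) * (e * ln (real d) + 1) < c * real d powr \<gamma>"
    using c(1) \<gamma>(1) e by real_asymp
  ultimately show ?thesis
    using W by eventually_elim (rule exists_far_apart_divider[OF g deg c(2) \<gamma>(2) e exponent])
qed

lemma ln_floor_powr_bounds:
  fixes x e :: real
  assumes x: "1 < x" and e: "e < 1" and two: "2 \<le> x powr e" and ln_two: "ln 2 < e * ln x / 2"
  shows "ln (real (nat \<lfloor>x powr e\<rfloor>)) \<le> e * ln x"
    and "e / 2 < ln (real (nat \<lfloor>x powr e\<rfloor>)) / ln x"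
    and "ln (real (nat \<lfloor>x powr e\<rfloor>)) / ln x < 1"
proof -
  define k where "k = real (nat \<lfloor>x powr e\<rfloor>)"
  have "k \<le> x powr e" "x powr e - 1 < k"
    unfolding k_def by (simp_all add: of_nat_nat)
  then have k: "k \<le> x powr e" "x powr e / 2 \<le> k"
    using two by linarith+
  have "0 < k" using k(2) two by linarith
  have ln_x: "0 < ln x" using x by simp
  have "ln k \<le> ln (x powr e)"
    using ln_le_cancel_iff[of k "x powr e"] k(1) \<open>0 < k\<close> x by simp
  then show upper: "ln k \<le> e * ln x" using x by simp
  have "e * ln x - ln 2 = ln (x powr e / 2)" using x by (simp add: ln_div)
  also have "\<dots> \<le> ln k"
    using k(2) two by (subst ln_le_cancel_iff) auto
  finally show "e / 2 < ln k / ln x"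
    using ln_two ln_x by (simp add: pos_less_divide_eq)
  have "e * ln x < 1 * ln x" using e ln_x by (rule mult_strict_right_mono)
  then have "ln k < ln x" using upper by linarith
  then show "ln k / ln x < 1" using ln_x by simp
qed

lemma packing_entropy_ratio_bounds:
  fixes e :: real
  assumes fin: "finite C" and card: "card C = nat \<lfloor>real d powr e\<rfloor>"
    and packing: "is_packing E C (e * ln (real d)) C"
    and d: "1 < real d" and e: "e < 1"
    and two: "2 \<le> real d powr e" and ln_two: "ln 2 < e * ln (real d) / 2"
  shows "e / 2 < packing_entropy E C (ln (real (card C))) / ln (real d)"
    and "packing_entropy E C (ln (real (card C))) / ln (real d) < 1"
proof -
  note bounds = ln_floor_powr_bounds[OF d e two ln_two, folded card]
  have "is_packing E C (ln (real (card C))) C"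
    using packing bounds(1) by (rule is_packing_mono_radius)
  then have "packing_entropy E C (ln (real (card C))) = ln (real (card C))"
    by (rule packing_entropy_eq_ln_card[OF fin])
  then show "e / 2 < packing_entropy E C (ln (real (card C))) / ln (real d)"
    and "packing_entropy E C (ln (real (card C))) / ln (real d) < 1"
    using bounds(2,3) by simp_all
qed

lemma exponent_choice:
  fixes \<gamma> L :: real
  assumes "0 < \<gamma>" "\<gamma> \<le> 1" "0 \<le> L"
  shows "\<exists>e. 0 < e \<and> e < 1 \<and> e * (1 + L) = \<gamma> / 4"
  using assms by (intro exI[of _ "\<gamma> / (4 * (1 + L))"]) (simp add: field_simps)

lemma eventually_choice_default:
  assumes "\<forall>\<^sub>F x in F. \<exists>y. P x y" "\<And>x. Q x y\<^sub>0" "\<And>x y. P x y \<Longrightarrow> Q x y"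
  shows "\<exists>f. (\<forall>x. Q x (f x)) \<and> (\<forall>\<^sub>F x in F. P x (f x))"
proof (intro exI conjI allI)
  define f where "f x = (if \<exists>y. P x y then SOME y. P x y else y\<^sub>0)" for x
  have P_f: "P x (f x)" if "\<exists>y. P x y" for x
    using someI_ex[OF that] that unfolding f_def by simp
  show "Q x (f x)" for x
    using P_f assms(2,3) unfolding f_def by (cases "\<exists>y. P x y") auto
  show "\<forall>\<^sub>F x in F. P x (f x)"
    using assms(1) by (rule eventually_mono) (rule P_f)
qed

theorem proposition2p1:
  fixes G0s G1s :: "nat \<Rightarrow> nat set set set"
    and G0 :: "nat \<Rightarrow> nat set set"
    and D :: nat and c \<gamma> :: real
  assumes subdec: "\<And>d. sub_decomposition d (G0s d) (G1s d)"
    and base: "\<And>d. G0 d \<in> G0s d"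
    and deg: "\<And>d. max_degree_le (G0 d) D"
    and c: "0 < c" "c \<le> 1"
    and \<gamma>: "0 < \<gamma>" "\<gamma> \<le> 1"
    and W: "\<forall>\<^sub>F d in sequentially. \<forall>v\<in>{1..d}. \<exists>W :: nat set.
              real (card W) \<ge> c * real d powr \<gamma> \<and>
              (\<forall>w\<in>W. G0 d \<union> {{v, w}} \<in> G1s d)"
  shows "\<exists>C :: nat \<Rightarrow> nat set set.
           (\<forall>d. single_edge_divider (G1s d) (G0 d) (C d)) \<and>
           (\<exists>c' C''. 0 < c' \<and> 0 < C'' \<and>
              (\<forall>\<^sub>F d in sequentially.
                 c' < packing_entropy (G0 d) (C d) (ln (real (card (C d)))) / ln (real d) \<and>
                 packing_entropy (G0 d) (C d) (ln (real (card (C d)))) / ln (real d) < C''))"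
proof -
  obtain e where e: "0 < e" "e < 1" "e * (1 + ln (real D + 1)) = \<gamma> / 4"
    using exponent_choice[OF \<gamma>, of "ln (real D + 1)"] by auto
  have graphs: "is_graph d (G0 d)" for d
    using subdec[of d] base[of d] unfolding sub_decomposition_def by blast
  obtain CC where divider: "\<forall>d. single_edge_divider (G1s d) (G0 d) (CC d)"
    and good: "\<forall>\<^sub>F d in sequentially. single_edge_divider (G1s d) (G0 d) (CC d) \<and> finite (CC d) \<and>
                 card (CC d) = nat \<lfloor>real d powr e\<rfloor> \<and> is_packing (G0 d) (CC d) (e * ln (real d)) (CC d)"
    using eventually_choice_default[OF eventually_exists_far_apart_divider[OF graphs deg c \<gamma> e(1,3) W],
        where Q = "\<lambda>d C. single_edge_divider (G1s d) (G0 d) C" and y\<^sub>0 = "{}"]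
    by (auto simp: single_edge_divider_def)
  have "\<forall>\<^sub>F d in sequentially. 1 < real d" by real_asymp
  moreover have "\<forall>\<^sub>F d in sequentially. 2 \<le> real d powr e" using e(1) by real_asymp
  moreover have "\<forall>\<^sub>F d in sequentially. ln 2 < e * ln (real d) / 2" using e(1) by real_asymp
  ultimately have "\<forall>\<^sub>F d in sequentially.
      e / 2 < packing_entropy (G0 d) (CC d) (ln (real (card (CC d)))) / ln (real d) \<and>
      packing_entropy (G0 d) (CC d) (ln (real (card (CC d)))) / ln (real d) < 1"
    using good by eventually_elim (use packing_entropy_ratio_bounds e(2) in blast)
  then show ?thesis
    using divider e(1) by (intro exI[of _ CC] conjI allI exI[of _ "e / 2"] exI[of _ "1::real"]) simp_all
qed

end
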